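(* Let $f:\mathbb{R}\to\mathbb{R}$ and $g:\mathbb{R}\to\mathbb{R}$ be real functions that are (real-)analytic in a neighborhood $U$ of a point $x_0\in\mathbb{R}$. Let $K\ge 0$ be an integer such that $f^{(j)}(x_0)=g^{(j)}(x_0)=0$ for $j=0,1,\dots,K$, and $g^{(K+1)}(x_0)\neq 0$. Let $R>0$ be such that $V=[x_0-R,\,x_0+R]\subset U$ and such that $f^{(j)}(x)\neq 0$ and $g^{(j)}(x)\neq 0$ for all $x\in V$ with $x\neq x_0$ and all $j=0,1,\dots,K+1$. Then \[ \lim_{n\to\infty}\frac{I_n^f(x)}{I_n^g(x)}=\frac{f^{(K+1)}(x_0)}{g^{(K+1)}(x_0)}, \] and the convergence is uniform in $x\in V\setminus\{x_0\}$, where the sequences $I_n^f$, $I_n^g$ are constructed with $x_0$ as the lower limit of integration.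
   Context: For a continuous function $h:\mathbb{R}\to\mathbb{R}$ and the point $x_0\in\mathbb{R}$, the sequence of functions $I_n^h$ ($n=0,1,2,\dots$) is defined inductively by $I_0^h(x)=h(x)$ and $I_{n+1}^h(x)=\int_{x_0}^{x} I_n^h(t)\,dt$. The notation $h^{(j)}$ denotes the $j$-th derivative of $h$ (with $h^{(0)}=h$). *)

theory Defs
  imports "HOL-Analysis.Analysis"
begin

definition real_analytic_on :: "(real \<Rightarrow> real) \<Rightarrow> real set \<Rightarrow> bool" where
  "real_analytic_on f U \<longleftrightarrow>
     (\<forall>y\<in>U. \<exists>r>0. \<exists>a::nat \<Rightarrow> real.
        \<forall>x\<in>ball y r. (\<lambda>k. a k * (x - y) ^ k) sums f x)"

definition oint :: "real \<Rightarrow> real \<Rightarrow> (real \<Rightarrow> real) \<Rightarrow> real" where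
  "oint a b h = (if a \<le> b then integral {a..b} h else - integral {b..a} h)"

fun iter_int :: "real \<Rightarrow> nat \<Rightarrow> (real \<Rightarrow> real) \<Rightarrow> real \<Rightarrow> real" where
  "iter_int x0 0 h = h"
| "iter_int x0 (Suc n) h = (\<lambda>x. oint x0 x (iter_int x0 n h))"

end

(*
  Since the derivatives of f of order at most K vanish at x0, integrating f^(K+1) from x0
  K + 1 times gives back f, so I_n f = I_(n+K+1) f^(K+1).  As f^(K+1) is Lipschitz near x0,
  f^(K+1) t = a + O(|t - x0|) with a = f^(K+1) x0, and integrating m times gives
  I_m f^(K+1) x = (x - x0)^m / m! * (a + O(R / (m + 1))) uniformly on [x0 - R, x0 + R].
  The same holds for g with b = g^(K+1) x0 <> 0; the common factor (x - x0)^m / m! cancels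
  in the quotient, which therefore tends to a / b uniformly.
*)

theory Submission
  imports Defs
begin

lemma real_analytic_on_deriv_series:
  assumes "real_analytic_on h U" "y \<in> U"
  obtains r a where "r > 0"
    and "\<And>x. x \<in> ball y r \<Longrightarrow> (h has_real_derivative deriv h x) (at x)"
    and "\<And>x. x \<in> ball y r \<Longrightarrow> (\<lambda>k. diffs a k * (x - y) ^ k) sums deriv h x"
proof -
  obtain r a where "r > 0" and h: "\<And>x. x \<in> ball y r \<Longrightarrow> (\<lambda>k. a k * (x - y) ^ k) sums h x"
    using assms unfolding real_analytic_on_def by blast
  have summable: "summable (\<lambda>k. a k * z ^ k)" if "norm z < r" for z
    using h[of "y + z"] that by (simp add: sums_iff dist_norm)
  have series: "(h has_real_derivative (\<Sum>k. diffs a k * (x - y) ^ k)) (at x)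
      \<and> (\<lambda>k. diffs a k * (x - y) ^ k) sums (\<Sum>k. diffs a k * (x - y) ^ k)"
    if x: "x \<in> ball y r" for x
  proof
    have nx: "norm (x - y) < r" using x by (simp add: dist_norm norm_minus_commute)
    have outer: "((\<lambda>z. \<Sum>k. a k * z ^ k) has_real_derivative (\<Sum>k. diffs a k * (x - y) ^ k))
        (at (x - y))"
      by (rule termdiffs_strong'[OF summable nx]) auto
    have inner: "((\<lambda>t. t - y) has_real_derivative 1) (at x)"
      by (auto intro!: derivative_eq_intros)
    have "((\<lambda>t. \<Sum>k. a k * (t - y) ^ k) has_real_derivative (\<Sum>k. diffs a k * (x - y) ^ k)) (at x)"
      using DERIV_chain2[where g="\<lambda>t. t - y" and x=x, OF outer inner] by simp
    then show "(h has_real_derivative (\<Sum>k. diffs a k * (x - y) ^ k)) (at x)"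
      by (rule has_field_derivative_transform_within_open[OF _ open_ball x])
        (use h in \<open>auto simp: sums_iff\<close>)
    show "(\<lambda>k. diffs a k * (x - y) ^ k) sums (\<Sum>k. diffs a k * (x - y) ^ k)"
      using termdiff_converges[OF nx summable] by (simp add: summable_sums)
  qed
  have "deriv h x = (\<Sum>k. diffs a k * (x - y) ^ k)" if "x \<in> ball y r" for x
    using series[OF that] by (blast intro: DERIV_imp_deriv)
  with series show thesis
    by (intro that[of r a, OF \<open>r > 0\<close>]) simp_all
qed

lemma real_analytic_on_deriv:
  assumes "real_analytic_on h U"
  shows "real_analytic_on (deriv h) U"
  unfolding real_analytic_on_def
proof
  fix y assume y: "y \<in> U"
  obtain r a where "r > 0"
    and "\<And>x. x \<in> ball y r \<Longrightarrow> (h has_real_derivative deriv h x) (at x)"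
    and "\<And>x. x \<in> ball y r \<Longrightarrow> (\<lambda>k. diffs a k * (x - y) ^ k) sums deriv h x"
    using real_analytic_on_deriv_series[OF assms y] by blast
  then show "\<exists>r>0. \<exists>a. \<forall>x\<in>ball y r. (\<lambda>k. a k * (x - y) ^ k) sums deriv h x"
    by blast
qed

lemma real_analytic_on_has_higher_deriv:
  assumes "real_analytic_on h U" "y \<in> U"
  shows "((deriv ^^ j) h has_real_derivative (deriv ^^ Suc j) h y) (at y)"
proof -
  have "real_analytic_on ((deriv ^^ j) h) U"
    by (induction j) (simp_all add: assms real_analytic_on_deriv)
  then obtain r a where "r > 0"
    and "\<And>x. x \<in> ball y r \<Longrightarrow> ((deriv ^^ j) h has_real_derivative deriv ((deriv ^^ j) h) x) (at x)"
    and "\<And>x. x \<in> ball y r \<Longrightarrow> (\<lambda>k. diffs a k * (x - y) ^ k) sums deriv ((deriv ^^ j) h) x"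
    using real_analytic_on_deriv_series[OF _ assms(2)] by blast
  then show ?thesis by simp
qed

lemma continuous_on_closed_segment_integrable:
  fixes u :: "real \<Rightarrow> real"
  assumes "continuous_on (closed_segment a b) u"
  shows "u integrable_on {a..b}" "u integrable_on {b..a}"
proof -
  have "u integrable_on {min a b..max a b}"
    using assms by (intro integrable_continuous_interval)
      (simp add: closed_segment_eq_real_ivl min_def max_def split: if_splits)
  then show "u integrable_on {a..b}" "u integrable_on {b..a}"
    by (auto intro: integrable_on_subinterval)
qed

lemma oint_cong:
  assumes "\<And>t. t \<in> closed_segment a b \<Longrightarrow> u t = v t"
  shows "oint a b u = oint a b v"
  using assms unfolding oint_def closed_segment_eq_real_ivl by (auto intro!: integral_cong)

lemma oint_cmult: "oint a b (\<lambda>t. c * u t) = c * oint a b u"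
  by (simp add: oint_def)

lemma oint_diff:
  fixes u v :: "real \<Rightarrow> real"
  assumes "continuous_on (closed_segment a b) u" "continuous_on (closed_segment a b) v"
  shows "oint a b (\<lambda>t. u t - v t) = oint a b u - oint a b v"
  using continuous_on_closed_segment_integrable[OF assms(1)]
    continuous_on_closed_segment_integrable[OF assms(2)]
  by (simp add: oint_def integral_diff)

lemma oint_fundamental:
  fixes u u' :: "real \<Rightarrow> real"
  assumes "\<And>t. t \<in> closed_segment a b \<Longrightarrow> (u has_real_derivative u' t) (at t)"
  shows "oint a b u' = u b - u a"
proof (cases "a \<le> b")
  case True
  have "(u' has_integral u b - u a) {a..b}"
    using assms True
    by (intro fundamental_theorem_of_calculus)
      (auto simp: closed_segment_eq_real_ivl
         has_real_derivative_iff_has_vector_derivative[symmetric] intro: has_field_derivative_at_within)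
  then show ?thesis using True by (simp add: oint_def integral_unique)
next
  case False
  have "(u' has_integral u a - u b) {b..a}"
    using assms False
    by (intro fundamental_theorem_of_calculus)
      (auto simp: closed_segment_eq_real_ivl
         has_real_derivative_iff_has_vector_derivative[symmetric] intro: has_field_derivative_at_within)
  then show ?thesis using False by (simp add: oint_def integral_unique)
qed

lemma oint_taylor_monomial:
  "oint a b (\<lambda>t. (t - a) ^ k / fact k) = (b - a) ^ Suc k / fact (Suc k)"
proof -
  have deriv: "((\<lambda>t. (t - a) ^ Suc k / fact (Suc k)) has_real_derivative (t - a) ^ k / fact k) (at t)"
    for t
  proof -
    have "((\<lambda>t. (t - a) ^ Suc k) has_real_derivative real (Suc k) * (t - a) ^ k) (at t)"
      by (rule derivative_eq_intros refl | simp)+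
    from DERIV_cdivide[OF this, of "fact (Suc k)"] show ?thesis
      by (simp del: of_nat_Suc)
  qed
  have "oint a b (\<lambda>t. (t - a) ^ k / fact k)
      = (b - a) ^ Suc k / fact (Suc k) - (a - a) ^ Suc k / fact (Suc k)"
    by (rule oint_fundamental) (rule deriv)
  then show ?thesis by simp
qed

lemma abs_oint_le:
  fixes D E :: "real \<Rightarrow> real"
  assumes "continuous_on (closed_segment a b) D" "continuous_on (closed_segment a b) E"
    and "\<And>t. t \<in> closed_segment a b \<Longrightarrow> \<bar>D t\<bar> \<le> E t"
  shows "\<bar>oint a b D\<bar> \<le> \<bar>oint a b E\<bar>"
proof -
  have "\<bar>integral {c..d} D\<bar> \<le> \<bar>integral {c..d} E\<bar>"
    if "{c..d} = closed_segment a b" "D integrable_on {c..d}" "E integrable_on {c..d}" for c d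
    using integral_norm_bound_integral[OF that(2,3)] assms(3) that(1) by force
  then show ?thesis
    using continuous_on_closed_segment_integrable[OF assms(1)]
      continuous_on_closed_segment_integrable[OF assms(2)]
    unfolding oint_def closed_segment_eq_real_ivl by (cases "a \<le> b") auto
qed

lemma abs_oint_abs_taylor_monomial:
  "\<bar>oint a b (\<lambda>t. \<bar>t - a\<bar> ^ k / fact k)\<bar> = \<bar>b - a\<bar> ^ Suc k / fact (Suc k)"
proof -
  define s :: real where "s = sgn (b - a)"
  have "\<bar>t - a\<bar> = s * (t - a)" if "t \<in> closed_segment a b" for t
    using that by (auto simp: s_def sgn_if closed_segment_eq_real_ivl split: if_splits)
  then have "oint a b (\<lambda>t. \<bar>t - a\<bar> ^ k / fact k) = oint a b (\<lambda>t. s ^ k * ((t - a) ^ k / fact k))"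
    by (intro oint_cong) (simp add: power_mult_distrib)
  also have "\<dots> = s ^ k * ((b - a) ^ Suc k / fact (Suc k))"
    by (simp only: oint_cmult oint_taylor_monomial)
  finally have "\<bar>oint a b (\<lambda>t. \<bar>t - a\<bar> ^ k / fact k)\<bar> = \<bar>s\<bar> ^ k * (\<bar>b - a\<bar> ^ Suc k / fact (Suc k))"
    by (simp add: abs_mult power_abs del: fact_Suc)
  moreover have "\<bar>s\<bar> ^ k * \<bar>b - a\<bar> ^ Suc k = \<bar>b - a\<bar> ^ Suc k"
    by (cases "b = a") (simp_all add: s_def)
  ultimately show ?thesis
    by simp
qed

lemma continuous_on_oint:
  fixes u :: "real \<Rightarrow> real"
  assumes "continuous_on (cball x0 R) u"
  shows "continuous_on (cball x0 R) (\<lambda>x. oint x0 x u)"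
proof (cases "R \<ge> 0")
  case True
  have int: "u integrable_on {x0 - R..x0 + R}"
    using assms by (simp add: cball_eq_atLeastAtMost integrable_continuous_interval)
  have repr: "oint x0 x u = integral {x0 - R..x} u - integral {x0 - R..x0} u"
    if "x \<in> cball x0 R" for x
  proof (cases "x0 \<le> x")
    case True
    have "integral {x0 - R..x0} u + integral {x0..x} u = integral {x0 - R..x} u"
      using True \<open>R \<ge> 0\<close> that
      by (intro Henstock_Kurzweil_Integration.integral_combine integrable_on_subinterval[OF int])
        (auto simp: cball_eq_atLeastAtMost)
    then show ?thesis using True by (simp add: oint_def)
  next
    case False
    have "integral {x0 - R..x} u + integral {x..x0} u = integral {x0 - R..x0} u"
      using False \<open>R \<ge> 0\<close> that
      by (intro Henstock_Kurzweil_Integration.integral_combine integrable_on_subinterval[OF int])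
        (auto simp: cball_eq_atLeastAtMost)
    then show ?thesis using False by (simp add: oint_def)
  qed
  have "continuous_on (cball x0 R) (\<lambda>x. integral {x0 - R..x} u - integral {x0 - R..x0} u)"
    unfolding cball_eq_atLeastAtMost
    by (intro continuous_intros indefinite_integral_continuous_1 int)
  then show ?thesis
    by (rule continuous_on_eq) (simp add: repr)
qed simp

lemma closed_segment_subset_cball:
  fixes x x0 R :: real
  assumes "x \<in> cball x0 R"
  shows "closed_segment x0 x \<subseteq> cball x0 R"
proof (rule closed_segment_subset[OF _ assms convex_cball])
  show "x0 \<in> cball x0 R"
    using assms zero_le_dist[of x0 x] unfolding centre_in_cball mem_cball by linarith
qed

lemma iter_int_add: "iter_int x0 (n + m) h = iter_int x0 n (iter_int x0 m h)"
  by (induction n) auto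

lemma iter_int_cong:
  assumes "\<And>t. t \<in> cball x0 R \<Longrightarrow> u t = v t" "x \<in> cball x0 R"
  shows "iter_int x0 n u x = iter_int x0 n v x"
  using assms(2)
proof (induction n arbitrary: x)
  case 0
  then show ?case using assms(1) by simp
next
  case (Suc n)
  then show ?case
    using closed_segment_subset_cball[OF Suc.prems] by (auto intro!: oint_cong)
qed

lemma continuous_on_iter_int:
  assumes "continuous_on (cball x0 R) u"
  shows "continuous_on (cball x0 R) (iter_int x0 n u)"
  by (induction n) (simp_all add: assms continuous_on_oint)

lemma iter_int_higher_deriv:
  assumes "\<And>j t. j < k \<Longrightarrow> t \<in> cball x0 R \<Longrightarrow>
      ((deriv ^^ j) h has_real_derivative (deriv ^^ Suc j) h t) (at t)"
    and "\<And>j. j < k \<Longrightarrow> (deriv ^^ j) h x0 = 0"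
    and "x \<in> cball x0 R"
  shows "iter_int x0 k ((deriv ^^ k) h) x = h x"
  using assms
proof (induction k arbitrary: x)
  case 0
  then show ?case by simp
next
  case (Suc k)
  have step: "iter_int x0 1 ((deriv ^^ Suc k) h) t = (deriv ^^ k) h t" if "t \<in> cball x0 R" for t
  proof -
    have "iter_int x0 1 ((deriv ^^ Suc k) h) t = (deriv ^^ k) h t - (deriv ^^ k) h x0"
      using Suc.prems(1) closed_segment_subset_cball[OF that] by (auto intro!: oint_fundamental)
    then show ?thesis using Suc.prems(2) by simp
  qed
  have "iter_int x0 (Suc k) ((deriv ^^ Suc k) h) x
      = iter_int x0 k (iter_int x0 1 ((deriv ^^ Suc k) h)) x"
    using iter_int_add[of x0 k 1] by simp
  also have "\<dots> = iter_int x0 k ((deriv ^^ k) h) x"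
    by (rule iter_int_cong[OF step Suc.prems(3)])
  also have "\<dots> = h x"
    by (rule Suc.IH) (use Suc.prems in auto)
  finally show ?case .
qed

lemma iter_int_taylor_bound:
  fixes F :: "real \<Rightarrow> real"
  assumes "continuous_on (cball x0 R) F"
    and "\<And>t. t \<in> cball x0 R \<Longrightarrow> \<bar>F t - F x0\<bar> \<le> L * \<bar>t - x0\<bar>"
    and "0 \<le> L" and "x \<in> cball x0 R"
  shows "\<bar>iter_int x0 m F x - F x0 * ((x - x0) ^ m / fact m)\<bar>
      \<le> L * (\<bar>x - x0\<bar> ^ Suc m / fact (Suc m))"
  using assms(4)
proof (induction m arbitrary: x)
  case 0
  then show ?case using assms(2) by simp
next
  case (Suc m)
  define D where "D t = iter_int x0 m F t - F x0 * ((t - x0) ^ m / fact m)" for t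
  have seg: "closed_segment x0 x \<subseteq> cball x0 R"
    using Suc.prems by (rule closed_segment_subset_cball)
  have cont_I: "continuous_on (closed_segment x0 x) (iter_int x0 m F)"
    using continuous_on_iter_int[OF assms(1)] seg by (rule continuous_on_subset)
  have cont_P: "continuous_on (closed_segment x0 x) (\<lambda>t. F x0 * ((t - x0) ^ m / fact m))"
    by (intro continuous_intros) simp
  have cont_D: "continuous_on (closed_segment x0 x) D"
    unfolding D_def by (intro continuous_intros cont_I cont_P)
  have "\<bar>iter_int x0 (Suc m) F x - F x0 * ((x - x0) ^ Suc m / fact (Suc m))\<bar> = \<bar>oint x0 x D\<bar>"
    unfolding D_def oint_diff[OF cont_I cont_P] oint_cmult oint_taylor_monomial by simp
  also have "\<dots> \<le> \<bar>oint x0 x (\<lambda>t. L * (\<bar>t - x0\<bar> ^ Suc m / fact (Suc m)))\<bar>"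
    using Suc.IH seg unfolding D_def
    by (intro abs_oint_le cont_D[unfolded D_def] continuous_intros) auto
  also have "\<dots> = L * (\<bar>x - x0\<bar> ^ Suc (Suc m) / fact (Suc (Suc m)))"
    using \<open>0 \<le> L\<close> by (simp only: oint_cmult abs_mult abs_oint_abs_taylor_monomial abs_of_nonneg)
  finally show ?case .
qed

lemma continuous_derivative_imp_lipschitz_on:
  fixes F F' :: "real \<Rightarrow> real"
  assumes "compact S" "convex S"
    and "\<And>t. t \<in> S \<Longrightarrow> (F has_real_derivative F' t) (at t within S)"
    and "continuous_on S F'"
  obtains L where "L-lipschitz_on S F"
proof -
  have "bounded (F' ` S)"
    using compact_continuous_image[OF assms(4,1)] by (rule compact_imp_bounded)
  then obtain B where "B > 0" "\<And>t. t \<in> S \<Longrightarrow> norm (F' t) \<le> B"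
    unfolding bounded_pos by blast
  then have "B-lipschitz_on S F"
    using field_differentiable_bound[OF assms(2,3)] by (intro lipschitz_onI) (auto simp: dist_norm)
  then show thesis by (rule that)
qed

lemma abs_divide_sub_divide_le:
  fixes A B P a b \<eta> :: real
  assumes "P \<noteq> 0" "b \<noteq> 0" "\<bar>A - a * P\<bar> \<le> \<eta> * \<bar>P\<bar>" "\<bar>B - b * P\<bar> \<le> \<eta> * \<bar>P\<bar>" "\<eta> \<le> \<bar>b\<bar> / 2"
  shows "\<bar>A / B - a / b\<bar> \<le> 2 * (\<bar>a\<bar> + \<bar>b\<bar>) * \<eta> / b\<^sup>2"
proof -
  have "\<eta> * \<bar>P\<bar> \<le> \<bar>b\<bar> * \<bar>P\<bar> / 2"
    using mult_right_mono[OF assms(5), of "\<bar>P\<bar>"] by simp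
  then have "\<bar>b\<bar> * \<bar>P\<bar> / 2 \<le> \<bar>B\<bar>"
    using assms(4) abs_triangle_ineq2[of "b * P" B] by (simp add: abs_mult abs_minus_commute)
  then have "\<bar>b\<bar> * (\<bar>b\<bar> * \<bar>P\<bar> / 2) \<le> \<bar>b\<bar> * \<bar>B\<bar>"
    by (rule mult_left_mono) simp
  then have B_lower: "b\<^sup>2 * \<bar>P\<bar> / 2 \<le> \<bar>b * B\<bar>"
    by (simp add: abs_mult power2_eq_square mult.assoc[symmetric])
  have "0 < b\<^sup>2 * \<bar>P\<bar> / 2"
    using assms(1,2) by simp
  with B_lower have "B \<noteq> 0"
    by auto
  then have "\<bar>A / B - a / b\<bar> = \<bar>(b * (A - a * P) - a * (B - b * P)) / (b * B)\<bar>"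
    using assms(2) by (simp add: field_simps)
  also have "\<dots> \<le> (\<bar>a\<bar> + \<bar>b\<bar>) * \<eta> * \<bar>P\<bar> / (b\<^sup>2 * \<bar>P\<bar> / 2)"
  proof -
    have "\<bar>b * (A - a * P) - a * (B - b * P)\<bar> \<le> \<bar>b\<bar> * \<bar>A - a * P\<bar> + \<bar>a\<bar> * \<bar>B - b * P\<bar>"
      using abs_triangle_ineq4[of "b * (A - a * P)" "a * (B - b * P)"] by (simp only: abs_mult)
    also have "\<dots> \<le> \<bar>b\<bar> * (\<eta> * \<bar>P\<bar>) + \<bar>a\<bar> * (\<eta> * \<bar>P\<bar>)"
      by (intro add_mono mult_left_mono assms(3,4)) simp_all
    also have "\<dots> = (\<bar>a\<bar> + \<bar>b\<bar>) * \<eta> * \<bar>P\<bar>"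
      by (simp add: algebra_simps)
    finally have num: "\<bar>b * (A - a * P) - a * (B - b * P)\<bar> \<le> (\<bar>a\<bar> + \<bar>b\<bar>) * \<eta> * \<bar>P\<bar>" .
    have "0 \<le> \<eta> * \<bar>P\<bar>"
      using assms(3) abs_ge_zero order_trans by blast
    then have "0 \<le> (\<bar>a\<bar> + \<bar>b\<bar>) * \<eta> * \<bar>P\<bar>"
      by (simp add: mult.assoc)
    with num B_lower \<open>0 < b\<^sup>2 * \<bar>P\<bar> / 2\<close> show ?thesis
      unfolding abs_divide by (intro frac_le)
  qed
  also have "\<dots> = 2 * (\<bar>a\<bar> + \<bar>b\<bar>) * \<eta> / b\<^sup>2"
    using assms(1,2) by (simp add: divide_simps)
  finally show ?thesis .
qed

lemma uniform_limit_divide_relative_errors: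
  fixes A B P :: "nat \<Rightarrow> 'a \<Rightarrow> real"
  assumes "b \<noteq> 0" and "\<alpha> \<longlonglongrightarrow> 0" and "\<beta> \<longlonglongrightarrow> 0"
    and "\<And>n x. x \<in> S \<Longrightarrow> P n x \<noteq> 0"
    and "\<And>n x. x \<in> S \<Longrightarrow> \<bar>A n x - a * P n x\<bar> \<le> \<alpha> n * \<bar>P n x\<bar>"
    and "\<And>n x. x \<in> S \<Longrightarrow> \<bar>B n x - b * P n x\<bar> \<le> \<beta> n * \<bar>P n x\<bar>"
  shows "uniform_limit S (\<lambda>n x. A n x / B n x) (\<lambda>x. a / b) sequentially"
proof (rule uniform_limitI)
  fix e :: real
  assume "e > 0"
  define \<eta> where "\<eta> n = max (\<alpha> n) (\<beta> n)" for n
  define c where "c = 2 * (\<bar>a\<bar> + \<bar>b\<bar>) / b\<^sup>2"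
  have "\<eta> \<longlonglongrightarrow> 0"
    unfolding \<eta>_def using tendsto_max[OF assms(2,3)] by simp
  then have "\<forall>\<^sub>F n in sequentially. \<eta> n < \<bar>b\<bar> / 2" and "\<forall>\<^sub>F n in sequentially. c * \<eta> n < e"
    using assms(1) \<open>e > 0\<close>
    by (auto intro: order_tendstoD(2) tendsto_mult_right_zero simp del: less_divide_eq_numeral1)
  then show "\<forall>\<^sub>F n in sequentially. \<forall>x\<in>S. dist (A n x / B n x) (a / b) < e"
  proof eventually_elim
    case (elim n)
    show ?case
    proof
      fix x assume "x \<in> S"
      have "\<bar>A n x - a * P n x\<bar> \<le> \<eta> n * \<bar>P n x\<bar>" "\<bar>B n x - b * P n x\<bar> \<le> \<eta> n * \<bar>P n x\<bar>"
        using assms(5,6)[OF \<open>x \<in> S\<close>] unfolding \<eta>_def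
        by (meson abs_ge_zero max.cobounded1 max.cobounded2 mult_right_mono order_trans)+
      then have "\<bar>A n x / B n x - a / b\<bar> \<le> c * \<eta> n"
        using abs_divide_sub_divide_le[OF assms(4)[OF \<open>x \<in> S\<close>] assms(1)] elim
        by (simp add: c_def)
      then show "dist (A n x / B n x) (a / b) < e"
        using elim by (simp add: dist_real_def)
    qed
  qed
qed

lemma iter_int_asymptotics_real_analytic:
  assumes "real_analytic_on f U" "cball x0 R \<subseteq> U"
    and "\<And>j. j \<le> K \<Longrightarrow> (deriv ^^ j) f x0 = 0"
  obtains \<epsilon> where "\<epsilon> \<longlonglongrightarrow> 0" and "\<And>n x. x \<in> cball x0 R \<Longrightarrow>
      \<bar>iter_int x0 n f x - (deriv ^^ Suc K) f x0 * ((x - x0) ^ (n + Suc K) / fact (n + Suc K))\<bar>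
        \<le> \<epsilon> n * \<bar>(x - x0) ^ (n + Suc K) / fact (n + Suc K)\<bar>"
proof -
  define F where "F = (deriv ^^ Suc K) f"
  have deriv: "((deriv ^^ j) f has_real_derivative (deriv ^^ Suc j) f t) (at t)"
    if "t \<in> cball x0 R" for j t
    using real_analytic_on_has_higher_deriv[OF assms(1)] assms(2) that by blast
  have cont: "continuous_on (cball x0 R) ((deriv ^^ j) f)" for j
    using deriv by (intro continuous_at_imp_continuous_on ballI DERIV_isCont)
  have "(F has_real_derivative (deriv ^^ Suc (Suc K)) f t) (at t within cball x0 R)"
    if "t \<in> cball x0 R" for t
    unfolding F_def using deriv[OF that] by (rule has_field_derivative_at_within)
  then obtain L where lip: "L-lipschitz_on (cball x0 R) F"
    using continuous_derivative_imp_lipschitz_on[OF compact_cball convex_cball _ cont] by blast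
  have "\<bar>iter_int x0 n f x - F x0 * ((x - x0) ^ (n + Suc K) / fact (n + Suc K))\<bar>
      \<le> L * R / real (Suc n) * \<bar>(x - x0) ^ (n + Suc K) / fact (n + Suc K)\<bar>"
    if x: "x \<in> cball x0 R" for n x
  proof -
    define m where "m = n + Suc K"
    have "iter_int x0 (Suc K) F t = f t" if "t \<in> cball x0 R" for t
      unfolding F_def using deriv assms(3) that by (intro iter_int_higher_deriv) auto
    then have "iter_int x0 n f x = iter_int x0 n (iter_int x0 (Suc K) F) x"
      by (intro iter_int_cong[OF _ x]) simp
    then have "iter_int x0 n f x = iter_int x0 m F x"
      unfolding m_def iter_int_add .
    then have "\<bar>iter_int x0 n f x - F x0 * ((x - x0) ^ m / fact m)\<bar>
        = \<bar>iter_int x0 m F x - F x0 * ((x - x0) ^ m / fact m)\<bar>"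
      by simp
    also have "\<dots> \<le> L * (\<bar>x - x0\<bar> ^ Suc m / fact (Suc m))"
      using lipschitz_on_normD[OF lip _ centre_in_cball[THEN iffD2]] lipschitz_on_nonneg[OF lip] x
      by (intro iter_int_taylor_bound[OF cont[of "Suc K", folded F_def]]) (auto simp: dist_real_def)
    also have "\<dots> = L * \<bar>x - x0\<bar> / real (Suc m) * \<bar>(x - x0) ^ m / fact m\<bar>"
      by (simp add: abs_mult power_abs field_simps)
    also have "\<dots> \<le> L * R / real (Suc n) * \<bar>(x - x0) ^ m / fact m\<bar>"
      using x lipschitz_on_nonneg[OF lip]
      by (intro mult_right_mono frac_le mult_left_mono)
        (auto simp: m_def dist_real_def abs_minus_commute)
    finally show ?thesis
      unfolding m_def .
  qed
  moreover have "(\<lambda>n. L * R / real (Suc n)) \<longlonglongrightarrow> 0"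
    using LIMSEQ_Suc[OF lim_const_over_n] by simp
  ultimately show thesis
    using that unfolding F_def by blast
qed

theorem lemma1:
  fixes f g :: "real \<Rightarrow> real" and U :: "real set" and x0 R :: real and K :: nat
  assumes "open U" and "x0 \<in> U"
    and "real_analytic_on f U" and "real_analytic_on g U"
    and "\<And>j. j \<le> K \<Longrightarrow> (deriv ^^ j) f x0 = 0 \<and> (deriv ^^ j) g x0 = 0"
    and "(deriv ^^ (Suc K)) g x0 \<noteq> 0"
    and "R > 0" and "cball x0 R \<subseteq> U"
    and "\<And>x j. x \<in> cball x0 R \<Longrightarrow> x \<noteq> x0 \<Longrightarrow> j \<le> Suc K \<Longrightarrow>
           (deriv ^^ j) f x \<noteq> 0 \<and> (deriv ^^ j) g x \<noteq> 0"
  shows "(\<forall>x\<in>cball x0 R - {x0}.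
            (\<lambda>n. iter_int x0 n f x / iter_int x0 n g x)
              \<longlonglongrightarrow> (deriv ^^ (Suc K)) f x0 / (deriv ^^ (Suc K)) g x0)
       \<and> uniform_limit (cball x0 R - {x0})
            (\<lambda>n x. iter_int x0 n f x / iter_int x0 n g x)
            (\<lambda>x. (deriv ^^ (Suc K)) f x0 / (deriv ^^ (Suc K)) g x0) sequentially"
proof -
  let ?P = "\<lambda>n x. (x - x0) ^ (n + Suc K) / fact (n + Suc K)"
  obtain \<alpha> where "\<alpha> \<longlonglongrightarrow> 0" and f: "\<And>n x. x \<in> cball x0 R \<Longrightarrow>
      \<bar>iter_int x0 n f x - (deriv ^^ Suc K) f x0 * ?P n x\<bar> \<le> \<alpha> n * \<bar>?P n x\<bar>"
    using iter_int_asymptotics_real_analytic[OF assms(3,8)] assms(5) by blast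
  obtain \<beta> where "\<beta> \<longlonglongrightarrow> 0" and g: "\<And>n x. x \<in> cball x0 R \<Longrightarrow>
      \<bar>iter_int x0 n g x - (deriv ^^ Suc K) g x0 * ?P n x\<bar> \<le> \<beta> n * \<bar>?P n x\<bar>"
    using iter_int_asymptotics_real_analytic[OF assms(4,8)] assms(5) by blast
  have uniform: "uniform_limit (cball x0 R - {x0}) (\<lambda>n x. iter_int x0 n f x / iter_int x0 n g x)
      (\<lambda>x. (deriv ^^ Suc K) f x0 / (deriv ^^ Suc K) g x0) sequentially"
  proof (rule uniform_limit_divide_relative_errors[where P = ?P, OF assms(6) \<open>\<alpha> \<longlonglongrightarrow> 0\<close> \<open>\<beta> \<longlonglongrightarrow> 0\<close>])
    show "?P n x \<noteq> 0" if "x \<in> cball x0 R - {x0}" for n x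
      using that by simp
  qed (blast intro: f g)+
  show ?thesis
  proof (intro conjI ballI uniform)
    fix x assume "x \<in> cball x0 R - {x0}"
    from tendsto_uniform_limitI[OF uniform this]
    show "(\<lambda>n. iter_int x0 n f x / iter_int x0 n g x)
        \<longlonglongrightarrow> (deriv ^^ Suc K) f x0 / (deriv ^^ Suc K) g x0" .
  qed
qed

end
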